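(* The map $(\mathfrak F,\mathfrak G)\mapsto\mathrm{St}_{\mathfrak F}\cap\mathrm{St}_{\mathfrak G}$ from the set of taut couples of generalized flags in $V$ and $V_*$ to the set of subalgebras of $\mathfrak{gl}(V,V_* )$ is injective.
   Context: $V,V_*$: countable-dimensional complex spaces with nondegenerate pairing; $\mathfrak{gl}(V,V_* )=V\otimes V_*$ acting on $V$ by $(v\otimes w)u=\langle u,w\rangle v$ and on $V_*$ by $(v\otimes w)y=-\langle v,y\rangle w$. Orthogonal complement $F^\perp$; closed: $F=F^{\perp\perp}$; $\overline F=F^{\perp\perp}$. Generalized flag: chain of subspaces, every member in an immediate predecessor–successor pair $F'\subsetneq F''$ (no member strictly between), every nonzero vector in $F''\setminus F'$ for some pair. Semiclosed: $\overline{F'}\in\{F',F''\}$ for every pair. $\mathrm{St}$ = stabilizer in $\mathfrak{gl}(V,V_* )$. Taut couple: semiclosed generalized flags $\mathfrak F$ in $V$, $\mathfrak G$ in $V_*$ with $\mathfrak F^\perp=\{F^\perp\}$ stable under $\mathrm{St}_{\mathfrak G}$ and $\mathfrak G^\perp$ stable under $\mathrm{St}_{\mathfrak F}$. *)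

theory Defs
  imports Complex_Main "HOL-Library.Countable_Set"
begin

text \<open>V is modelled as the whole type 'v with a complex scalar multiplication scV,
  V_* as the whole type 'w with scalar multiplication scW, and the pairing as pr.\<close>

definition countable_dim :: "(complex \<Rightarrow> 'v::ab_group_add \<Rightarrow> 'v) \<Rightarrow> bool" where
  "countable_dim sc \<longleftrightarrow> (\<exists>B. countable B \<and> infinite B \<and> \<not> module.dependent sc B
       \<and> module.span sc B = UNIV)"

definition nondeg_pairing ::
  "(complex \<Rightarrow> 'v::ab_group_add \<Rightarrow> 'v) \<Rightarrow> (complex \<Rightarrow> 'w::ab_group_add \<Rightarrow> 'w)
   \<Rightarrow> ('v \<Rightarrow> 'w \<Rightarrow> complex) \<Rightarrow> bool" where
  "nondeg_pairing scV scW pr \<longleftrightarrow>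
     (\<forall>y. Vector_Spaces.linear scV (*) (\<lambda>u. pr u y)) \<and>
     (\<forall>u. Vector_Spaces.linear scW (*) (pr u)) \<and>
     (\<forall>u. (\<forall>y. pr u y = 0) \<longrightarrow> u = 0) \<and>
     (\<forall>y. (\<forall>u. pr u y = 0) \<longrightarrow> y = 0)"

definition perpV :: "('v \<Rightarrow> 'w \<Rightarrow> complex) \<Rightarrow> 'v set \<Rightarrow> 'w set" where
  "perpV pr F = {y. \<forall>u\<in>F. pr u y = 0}"

definition perpW :: "('v \<Rightarrow> 'w \<Rightarrow> complex) \<Rightarrow> 'w set \<Rightarrow> 'v set" where
  "perpW pr G = {u. \<forall>y\<in>G. pr u y = 0}"

definition imm_pair :: "'a set set \<Rightarrow> 'a set \<Rightarrow> 'a set \<Rightarrow> bool" where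
  "imm_pair \<FF> F' F'' \<longleftrightarrow> F' \<in> \<FF> \<and> F'' \<in> \<FF> \<and> F' \<subset> F'' \<and>
     \<not> (\<exists>H\<in>\<FF>. F' \<subset> H \<and> H \<subset> F'')"

definition gen_flag :: "(complex \<Rightarrow> 'a::ab_group_add \<Rightarrow> 'a) \<Rightarrow> 'a set set \<Rightarrow> bool" where
  "gen_flag sc \<FF> \<longleftrightarrow>
     (\<forall>F\<in>\<FF>. module.subspace sc F) \<and>
     (\<forall>F\<in>\<FF>. \<forall>G\<in>\<FF>. F \<subseteq> G \<or> G \<subseteq> F) \<and>
     (\<forall>F\<in>\<FF>. \<exists>G. imm_pair \<FF> F G \<or> imm_pair \<FF> G F) \<and>
     (\<forall>v. v \<noteq> 0 \<longrightarrow> (\<exists>F' F''. imm_pair \<FF> F' F'' \<and> v \<in> F'' \<and> v \<notin> F'))"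

text \<open>Semiclosed generalized flags in V and in V_* (closure = double orthogonal).\<close>
definition semiclosed_V ::
  "(complex \<Rightarrow> 'v::ab_group_add \<Rightarrow> 'v) \<Rightarrow> ('v \<Rightarrow> 'w \<Rightarrow> complex) \<Rightarrow> 'v set set \<Rightarrow> bool" where
  "semiclosed_V scV pr \<FF> \<longleftrightarrow> gen_flag scV \<FF> \<and>
     (\<forall>F' F''. imm_pair \<FF> F' F'' \<longrightarrow> perpW pr (perpV pr F') \<in> {F', F''})"

definition semiclosed_W ::
  "(complex \<Rightarrow> 'w::ab_group_add \<Rightarrow> 'w) \<Rightarrow> ('v \<Rightarrow> 'w \<Rightarrow> complex) \<Rightarrow> 'w set set \<Rightarrow> bool" where
  "semiclosed_W scW pr \<GG> \<longleftrightarrow> gen_flag scW \<GG> \<and>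
     (\<forall>G' G''. imm_pair \<GG> G' G'' \<longrightarrow> perpV pr (perpW pr G') \<in> {G', G''})"

text \<open>gl(V,V_*) = V \<otimes> V_*: an element \<Sum> v_i \<otimes> w_i is represented by the pair of
  its actions on V and on V_* (this pair determines the element, by nondegeneracy).\<close>
definition glVV ::
  "(complex \<Rightarrow> 'v::ab_group_add \<Rightarrow> 'v) \<Rightarrow> (complex \<Rightarrow> 'w::ab_group_add \<Rightarrow> 'w)
   \<Rightarrow> ('v \<Rightarrow> 'w \<Rightarrow> complex) \<Rightarrow> (('v \<Rightarrow> 'v) \<times> ('w \<Rightarrow> 'w)) set" where
  "glVV scV scW pr =
     {((\<lambda>u. \<Sum>(v,w)\<leftarrow>ps. scV (pr u w) v), (\<lambda>y. - (\<Sum>(v,w)\<leftarrow>ps. scW (pr v y) w))) | ps. True}"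

definition St_V ::
  "(complex \<Rightarrow> 'v::ab_group_add \<Rightarrow> 'v) \<Rightarrow> (complex \<Rightarrow> 'w::ab_group_add \<Rightarrow> 'w)
   \<Rightarrow> ('v \<Rightarrow> 'w \<Rightarrow> complex) \<Rightarrow> 'v set set \<Rightarrow> (('v \<Rightarrow> 'v) \<times> ('w \<Rightarrow> 'w)) set" where
  "St_V scV scW pr \<FF> = {x \<in> glVV scV scW pr. \<forall>F\<in>\<FF>. fst x ` F \<subseteq> F}"

definition St_W ::
  "(complex \<Rightarrow> 'v::ab_group_add \<Rightarrow> 'v) \<Rightarrow> (complex \<Rightarrow> 'w::ab_group_add \<Rightarrow> 'w)
   \<Rightarrow> ('v \<Rightarrow> 'w \<Rightarrow> complex) \<Rightarrow> 'w set set \<Rightarrow> (('v \<Rightarrow> 'v) \<times> ('w \<Rightarrow> 'w)) set" where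
  "St_W scV scW pr \<GG> = {x \<in> glVV scV scW pr. \<forall>G\<in>\<GG>. snd x ` G \<subseteq> G}"

definition taut_couple ::
  "(complex \<Rightarrow> 'v::ab_group_add \<Rightarrow> 'v) \<Rightarrow> (complex \<Rightarrow> 'w::ab_group_add \<Rightarrow> 'w)
   \<Rightarrow> ('v \<Rightarrow> 'w \<Rightarrow> complex) \<Rightarrow> 'v set set \<Rightarrow> 'w set set \<Rightarrow> bool" where
  "taut_couple scV scW pr \<FF> \<GG> \<longleftrightarrow>
     semiclosed_V scV pr \<FF> \<and> semiclosed_W scW pr \<GG> \<and>
     (\<forall>x\<in>St_W scV scW pr \<GG>. \<forall>F\<in>\<FF>. snd x ` perpV pr F \<subseteq> perpV pr F) \<and>
     (\<forall>x\<in>St_V scV scW pr \<FF>. \<forall>G\<in>\<GG>. fst x ` perpW pr G \<subseteq> perpW pr G)"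

end

theory Submission
  imports Defs
begin

text \<open>
  The intersection St_F \<inter> St_G contains a rank-one element v \<otimes> w exactly when
  (v, w) is compatible with the couple: for each F in the flag, v \<in> F or w \<perp> F, and for
  each G, w \<in> G or v \<perp> G.  So St_F \<inter> St_G determines the compatibility relation, and it
  remains to recover the couple from it.

  1. Flags (as chains of sets) are determined by the lower sets low v of the cuts of nonzero
     vectors, and for semiclosed flags already by the closures (low v)^\<perp>^\<perp>.
  2. Rank-one elements: membership of v \<otimes> w in a stabilizer; tautness of the couple, tested on
     rank-one elements, yields a transfer property between the two flags.
  3. For a taut couple, the orthogonal complement of the set of vectors compatible with v is
     the closure of low v (and symmetrically in V_*, via the swapped pairing).
\<close>

definition set_flag :: "'a::zero set set \<Rightarrow> bool" where
  "set_flag \<FF> \<longleftrightarrow> (\<forall>F\<in>\<FF>. 0 \<in> F) \<and> (\<forall>F\<in>\<FF>. \<forall>G\<in>\<FF>. F \<subseteq> G \<or> G \<subseteq> F) \<and>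
     (\<forall>F\<in>\<FF>. \<exists>G. imm_pair \<FF> F G \<or> imm_pair \<FF> G F) \<and>
     (\<forall>v. v \<noteq> 0 \<longrightarrow> (\<exists>F' F''. imm_pair \<FF> F' F'' \<and> v \<in> F'' \<and> v \<notin> F'))"

text \<open>For a nonzero vector v, the pair that separates it: low is the largest member not
  containing v and high the smallest member containing v (these are unique, see below).\<close>

definition cut :: "'a set set \<Rightarrow> 'a \<Rightarrow> 'a set \<times> 'a set" where
  "cut \<FF> v = (SOME (A, B). imm_pair \<FF> A B \<and> v \<in> B \<and> v \<notin> A)"

definition low :: "'a set set \<Rightarrow> 'a \<Rightarrow> 'a set" where
  "low \<FF> v = fst (cut \<FF> v)"

definition high :: "'a set set \<Rightarrow> 'a \<Rightarrow> 'a set" where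
  "high \<FF> v = snd (cut \<FF> v)"

lemma set_flag_zero: "set_flag \<FF> \<Longrightarrow> F \<in> \<FF> \<Longrightarrow> 0 \<in> F"
  unfolding set_flag_def by blast

lemma set_flag_chain: "set_flag \<FF> \<Longrightarrow> F \<in> \<FF> \<Longrightarrow> G \<in> \<FF> \<Longrightarrow> F \<subseteq> G \<or> G \<subseteq> F"
  unfolding set_flag_def by blast

lemma imm_pair_members: "imm_pair \<FF> A B \<Longrightarrow> A \<in> \<FF> \<and> B \<in> \<FF> \<and> A \<subset> B"
  unfolding imm_pair_def by blast

lemma cut_pair:
  assumes fl: "set_flag \<FF>" and v0: "v \<noteq> 0"
  shows "imm_pair \<FF> (low \<FF> v) (high \<FF> v)" "v \<in> high \<FF> v" "v \<notin> low \<FF> v"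
proof -
  obtain A B where "imm_pair \<FF> A B \<and> v \<in> B \<and> v \<notin> A"
    using fl v0 unfolding set_flag_def by blast
  then have "\<exists>AB. case AB of (A, B) \<Rightarrow> imm_pair \<FF> A B \<and> v \<in> B \<and> v \<notin> A" by auto
  then have "case cut \<FF> v of (A, B) \<Rightarrow> imm_pair \<FF> A B \<and> v \<in> B \<and> v \<notin> A"
    unfolding cut_def by (rule someI_ex)
  then show "imm_pair \<FF> (low \<FF> v) (high \<FF> v)" "v \<in> high \<FF> v" "v \<notin> low \<FF> v"
    unfolding low_def high_def by (simp_all add: case_prod_beta)
qed

lemma imm_pair_below:
  assumes fl: "set_flag \<FF>" and F: "F \<in> \<FF>" and AB: "imm_pair \<FF> A B" and "v \<in> B" "v \<notin> F"
  shows "F \<subseteq> A"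
proof (rule ccontr)
  assume "\<not> F \<subseteq> A"
  then have "A \<subset> F" using set_flag_chain[OF fl F] imm_pair_members[OF AB] by blast
  moreover have "F \<subset> B"
    using set_flag_chain[OF fl F] imm_pair_members[OF AB] \<open>v \<in> B\<close> \<open>v \<notin> F\<close> by blast
  ultimately show False using AB F unfolding imm_pair_def by blast
qed

lemma imm_pair_above:
  assumes fl: "set_flag \<FF>" and F: "F \<in> \<FF>" and AB: "imm_pair \<FF> A B" and "v \<notin> A" "v \<in> F"
  shows "B \<subseteq> F"
proof (rule ccontr)
  assume "\<not> B \<subseteq> F"
  then have "F \<subset> B" using set_flag_chain[OF fl F] imm_pair_members[OF AB] by blast
  moreover have "A \<subset> F"
    using set_flag_chain[OF fl F] imm_pair_members[OF AB] \<open>v \<notin> A\<close> \<open>v \<in> F\<close> by blast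
  ultimately show False using AB F unfolding imm_pair_def by blast
qed

lemma below_low:
  "set_flag \<FF> \<Longrightarrow> F \<in> \<FF> \<Longrightarrow> v \<noteq> 0 \<Longrightarrow> v \<notin> F \<Longrightarrow> F \<subseteq> low \<FF> v"
  using cut_pair imm_pair_below by metis

lemma high_below:
  "set_flag \<FF> \<Longrightarrow> F \<in> \<FF> \<Longrightarrow> v \<noteq> 0 \<Longrightarrow> v \<in> F \<Longrightarrow> high \<FF> v \<subseteq> F"
  using cut_pair imm_pair_above by metis

lemma low_psubset:
  assumes "set_flag \<FF>" "F \<in> \<FF>" "v \<in> F" "v \<noteq> 0"
  shows "low \<FF> v \<subset> F"
  using high_below[OF assms(1,2,4,3)] cut_pair[OF assms(1,4)] imm_pair_members by blast

lemma cut_unique: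
  assumes fl: "set_flag \<FF>" and AB: "imm_pair \<FF> A B" and v: "v \<in> B" "v \<notin> A"
  shows "low \<FF> v = A" "high \<FF> v = B"
proof -
  have A: "A \<in> \<FF>" and B: "B \<in> \<FF>" using imm_pair_members[OF AB] by auto
  have v0: "v \<noteq> 0" using set_flag_zero[OF fl A] v(2) by blast
  note c = cut_pair[OF fl v0]
  have "low \<FF> v \<in> \<FF>" "high \<FF> v \<in> \<FF>" using imm_pair_members[OF c(1)] by auto
  then show "low \<FF> v = A" "high \<FF> v = B"
    using below_low[OF fl A v0 v(2)] high_below[OF fl B v0 v(1)]
      imm_pair_below[OF fl _ AB v(1) c(3)] imm_pair_above[OF fl _ AB v(2) c(2)]
    by (auto intro: subset_antisym)
qed

lemma high_by_low:
  assumes fl: "set_flag \<FF>" and v0: "v \<noteq> 0"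
  shows "high \<FF> v = {u. u = 0 \<or> (u \<noteq> 0 \<and> low \<FF> u \<subseteq> low \<FF> v)}"
proof (intro set_eqI iffI)
  note c = cut_pair[OF fl v0]
  have lo: "low \<FF> v \<in> \<FF>" and hi: "high \<FF> v \<in> \<FF>" and lh: "low \<FF> v \<subset> high \<FF> v"
    using imm_pair_members[OF c(1)] by auto
  fix u
  show "u \<in> high \<FF> v" if "u \<in> {u. u = 0 \<or> (u \<noteq> 0 \<and> low \<FF> u \<subseteq> low \<FF> v)}"
    using that set_flag_zero[OF fl hi] below_low[OF fl hi] lh by blast
  show "u \<in> {u. u = 0 \<or> (u \<noteq> 0 \<and> low \<FF> u \<subseteq> low \<FF> v)}" if u: "u \<in> high \<FF> v"
  proof (cases "u = 0")
    case False
    note cu = cut_pair[OF fl False]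
    have "low \<FF> u \<in> \<FF>" using imm_pair_members[OF cu(1)] by blast
    then have "low \<FF> u \<subseteq> low \<FF> v"
      using imm_pair_below[OF fl _ c(1) u cu(3)] by blast
    then show ?thesis using False by blast
  qed simp
qed

lemma set_flag_cuts:
  assumes fl: "set_flag \<FF>"
  shows "\<FF> = {low \<FF> v | v. v \<noteq> 0} \<union> {high \<FF> v | v. v \<noteq> 0}"
proof (intro set_eqI iffI)
  fix F assume F: "F \<in> \<FF>"
  then obtain G where "imm_pair \<FF> F G \<or> imm_pair \<FF> G F" using fl unfolding set_flag_def by blast
  then show "F \<in> {low \<FF> v | v. v \<noteq> 0} \<union> {high \<FF> v | v. v \<noteq> 0}"
  proof
    assume FG: "imm_pair \<FF> F G"
    then obtain v where v: "v \<in> G" "v \<notin> F" unfolding imm_pair_def by blast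
    then have "v \<noteq> 0" using set_flag_zero[OF fl F] by blast
    then show ?thesis using cut_unique(1)[OF fl FG v] by blast
  next
    assume GF: "imm_pair \<FF> G F"
    then obtain v where v: "v \<in> F" "v \<notin> G" unfolding imm_pair_def by blast
    then have "v \<noteq> 0" using set_flag_zero[OF fl] imm_pair_members[OF GF] by blast
    then show ?thesis using cut_unique(2)[OF fl GF v] by blast
  qed
next
  fix F assume "F \<in> {low \<FF> v | v. v \<noteq> 0} \<union> {high \<FF> v | v. v \<noteq> 0}"
  then show "F \<in> \<FF>" using cut_pair[OF fl] imm_pair_members by blast
qed

lemma set_flag_eqI:
  assumes "set_flag \<FF>" "set_flag \<FF>'" and lows: "\<And>v. v \<noteq> 0 \<Longrightarrow> low \<FF> v = low \<FF>' v"
  shows "\<FF> = \<FF>'"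
proof -
  have "high \<FF> v = high \<FF>' v" if "v \<noteq> 0" for v
    using high_by_low[OF assms(1) that] high_by_low[OF assms(2) that] lows that by auto
  with lows show ?thesis
    by (subst set_flag_cuts[OF assms(1)], subst set_flag_cuts[OF assms(2)])
      (simp add: setcompr_eq_image)
qed

abbreviation pclosure :: "('a \<Rightarrow> 'b \<Rightarrow> complex) \<Rightarrow> 'a set \<Rightarrow> 'a set" where
  "pclosure p X \<equiv> perpW p (perpV p X)"

lemma perpV_antimono: "X \<subseteq> Y \<Longrightarrow> perpV p Y \<subseteq> perpV p X"
  unfolding perpV_def by blast

lemma perpW_antimono: "X \<subseteq> Y \<Longrightarrow> perpW p Y \<subseteq> perpW p X"
  unfolding perpW_def by blast

lemma pclosure_increasing: "X \<subseteq> pclosure p X"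
  unfolding perpV_def perpW_def by blast

text \<open>Swapping the arguments of the pairing exchanges the roles of V and V_*, which lets
  every statement about V be reused for V_*.\<close>

definition swp :: "('a \<Rightarrow> 'b \<Rightarrow> complex) \<Rightarrow> 'b \<Rightarrow> 'a \<Rightarrow> complex" where
  "swp p = (\<lambda>w v. p v w)"

lemma swp_swp [simp]: "swp (swp p) = p"
  unfolding swp_def ..

lemma perp_swp [simp]: "perpV (swp p) = perpW p" "perpW (swp p) = perpV p"
  unfolding perpV_def perpW_def swp_def by simp_all

definition semiclosed :: "('a \<Rightarrow> 'b \<Rightarrow> complex) \<Rightarrow> 'a set set \<Rightarrow> bool" where
  "semiclosed p \<FF> \<longleftrightarrow> (\<forall>F' F''. imm_pair \<FF> F' F'' \<longrightarrow> pclosure p F' \<in> {F', F''})"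

lemma pclosure_below:
  assumes fl: "set_flag \<FF>" and sc: "semiclosed p \<FF>"
    and G: "G \<in> \<FF>" and C: "C \<in> \<FF>" and GC: "G \<subset> C"
  shows "pclosure p G \<subseteq> C"
proof -
  obtain u where u: "u \<in> C" "u \<notin> G" using GC by blast
  then have u0: "u \<noteq> 0" using set_flag_zero[OF fl G] by blast
  note c = cut_pair[OF fl u0]
  have "pclosure p (low \<FF> u) \<subseteq> high \<FF> u"
    using sc c(1) imm_pair_members[OF c(1)] unfolding semiclosed_def by blast
  moreover have "pclosure p G \<subseteq> pclosure p (low \<FF> u)"
    using below_low[OF fl G u0 u(2)] by (intro perpW_antimono perpV_antimono)
  ultimately show ?thesis using high_below[OF fl C u0 u(1)] by blast
qed

lemma low_by_pclosure:
  assumes fl: "set_flag \<FF>" and sc: "semiclosed p \<FF>" and v0: "v \<noteq> 0"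
  shows "low \<FF> v = (if v \<in> pclosure p (low \<FF> v)
            then {u. u = 0 \<or> (u \<noteq> 0 \<and> pclosure p (low \<FF> u) \<subset> pclosure p (low \<FF> v))}
            else pclosure p (low \<FF> v))"
proof -
  note c = cut_pair[OF fl v0]
  have lo: "low \<FF> v \<in> \<FF>" and lh: "low \<FF> v \<subset> high \<FF> v" using imm_pair_members[OF c(1)] by auto
  have "pclosure p (low \<FF> v) \<in> {low \<FF> v, high \<FF> v}"
    using sc c(1) unfolding semiclosed_def by blast
  then consider "pclosure p (low \<FF> v) = low \<FF> v" | "pclosure p (low \<FF> v) = high \<FF> v" by blast
  then show ?thesis
  proof cases
    case 1
    then show ?thesis using c(3) by simp
  next
    case closed_high: 2
    have "low \<FF> v = {u. u = 0 \<or> (u \<noteq> 0 \<and> pclosure p (low \<FF> u) \<subset> pclosure p (low \<FF> v))}"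
    proof (intro set_eqI iffI)
      fix u assume u: "u \<in> low \<FF> v"
      show "u \<in> {u. u = 0 \<or> (u \<noteq> 0 \<and> pclosure p (low \<FF> u) \<subset> pclosure p (low \<FF> v))}"
      proof (cases "u = 0")
        case False
        have "low \<FF> u \<subset> low \<FF> v" using low_psubset[OF fl lo u False] .
        then have "pclosure p (low \<FF> u) \<subseteq> low \<FF> v"
          using pclosure_below[OF fl sc _ lo] cut_pair(1)[OF fl False] imm_pair_members by blast
        then show ?thesis using False closed_high lh by blast
      qed simp
    next
      fix u assume u: "u \<in> {u. u = 0 \<or> (u \<noteq> 0 \<and> pclosure p (low \<FF> u) \<subset> pclosure p (low \<FF> v))}"
      show "u \<in> low \<FF> v"
      proof (rule ccontr)
        assume "u \<notin> low \<FF> v"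
        with u set_flag_zero[OF fl lo]
        have "u \<noteq> 0" and lt: "pclosure p (low \<FF> u) \<subset> pclosure p (low \<FF> v)" by auto
        then have "pclosure p (low \<FF> v) \<subseteq> pclosure p (low \<FF> u)"
          using below_low[OF fl lo \<open>u \<noteq> 0\<close> \<open>u \<notin> low \<FF> v\<close>]
          by (intro perpW_antimono perpV_antimono)
        with lt show False by blast
      qed
    qed
    then show ?thesis using closed_high c(2) by simp
  qed
qed

lemma flag_eq_by_pclosures:
  assumes "set_flag \<FF>" "semiclosed p \<FF>" "set_flag \<FF>'" "semiclosed p \<FF>'"
    and cl: "\<And>v. v \<noteq> 0 \<Longrightarrow> pclosure p (low \<FF> v) = pclosure p (low \<FF>' v)"
  shows "\<FF> = \<FF>'"
proof (rule set_flag_eqI[OF assms(1,3)])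
  fix v :: 'a assume v0: "v \<noteq> 0"
  have lower_sets: "{u. u = 0 \<or> (u \<noteq> 0 \<and> pclosure p (low \<FF> u) \<subset> pclosure p (low \<FF>' v))}
      = {u. u = 0 \<or> (u \<noteq> 0 \<and> pclosure p (low \<FF>' u) \<subset> pclosure p (low \<FF>' v))}"
    using cl by auto
  have "low \<FF> v = (if v \<in> pclosure p (low \<FF> v)
      then {u. u = 0 \<or> (u \<noteq> 0 \<and> pclosure p (low \<FF> u) \<subset> pclosure p (low \<FF> v))}
      else pclosure p (low \<FF> v))"
    by (rule low_by_pclosure[OF assms(1,2) v0])
  also have "\<dots> = low \<FF>' v"
    unfolding cl[OF v0] lower_sets by (rule low_by_pclosure[OF assms(3,4) v0, symmetric])
  finally show "low \<FF> v = low \<FF>' v" .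
qed

lemma rank_one_stabilizes:
  fixes sc :: "complex \<Rightarrow> 'a::ab_group_add \<Rightarrow> 'a" and f :: "'a \<Rightarrow> complex"
  assumes m: "module sc" and S: "module.subspace sc S"
  shows "(\<lambda>u. sc (f u) v) ` S \<subseteq> S \<longleftrightarrow> v \<in> S \<or> (\<forall>u\<in>S. f u = 0)"
proof
  assume stab: "(\<lambda>u. sc (f u) v) ` S \<subseteq> S"
  show "v \<in> S \<or> (\<forall>u\<in>S. f u = 0)"
  proof (rule disjCI)
    assume "\<not> (\<forall>u\<in>S. f u = 0)"
    then obtain u where u: "u \<in> S" "f u \<noteq> 0" by blast
    then have "sc (inverse (f u)) (sc (f u) v) \<in> S"
      using stab module.subspace_scale[OF m S] by blast
    then show "v \<in> S" using u(2) module.scale_scale[OF m] module.scale_one[OF m] by simp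
  qed
next
  assume "v \<in> S \<or> (\<forall>u\<in>S. f u = 0)"
  then show "(\<lambda>u. sc (f u) v) ` S \<subseteq> S"
    using module.subspace_scale[OF m S] module.subspace_0[OF m S] module.scale_zero_left[OF m]
    by auto
qed

lemma nondeg_pairing_linear:
  assumes "nondeg_pairing scV scW pr"
  shows "module_hom scV (*) (\<lambda>u. pr u y)" "module_hom scW (*) (pr u)"
  using assms unfolding nondeg_pairing_def linear_iff_module_hom by auto

lemma perp_subspaces:
  assumes mV: "module scV" and mW: "module scW" and nd: "nondeg_pairing scV scW pr"
  shows "module.subspace scW (perpV pr F)" "module.subspace scV (perpW pr G)"
proof -
  have "perpV pr F = (\<Inter>u\<in>F. {y. pr u y = 0})" unfolding perpV_def by blast
  then show "module.subspace scW (perpV pr F)"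
    by (simp, intro module.subspace_Int[OF mW]
        module_hom.subspace_kernel[OF nondeg_pairing_linear(2)[OF nd]])
  have "perpW pr G = (\<Inter>y\<in>G. {u. pr u y = 0})" unfolding perpW_def by blast
  then show "module.subspace scV (perpW pr G)"
    by (simp, intro module.subspace_Int[OF mV]
        module_hom.subspace_kernel[OF nondeg_pairing_linear(1)[OF nd]])
qed

definition rk :: "(complex \<Rightarrow> 'v::ab_group_add \<Rightarrow> 'v) \<Rightarrow> (complex \<Rightarrow> 'w::ab_group_add \<Rightarrow> 'w)
    \<Rightarrow> ('v \<Rightarrow> 'w \<Rightarrow> complex) \<Rightarrow> 'v \<Rightarrow> 'w \<Rightarrow> ('v \<Rightarrow> 'v) \<times> ('w \<Rightarrow> 'w)" where
  "rk scV scW pr v w = ((\<lambda>u. scV (pr u w) v), (\<lambda>y. - scW (pr v y) w))"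

lemma rk_in_gl: "rk scV scW pr v w \<in> glVV scV scW pr"
  unfolding glVV_def rk_def by (rule CollectI, rule exI[of _ "[(v, w)]"]) simp

lemma rk_stabilizes:
  assumes mV: "module scV" and mW: "module scW"
  shows "module.subspace scV F \<Longrightarrow>
      fst (rk scV scW pr v w) ` F \<subseteq> F \<longleftrightarrow> v \<in> F \<or> w \<in> perpV pr F"
    and "module.subspace scW G \<Longrightarrow>
      snd (rk scV scW pr v w) ` G \<subseteq> G \<longleftrightarrow> w \<in> G \<or> v \<in> perpW pr G"
proof -
  assume "module.subspace scV F"
  then show "fst (rk scV scW pr v w) ` F \<subseteq> F \<longleftrightarrow> v \<in> F \<or> w \<in> perpV pr F"
    using rank_one_stabilizes[OF mV, of F "\<lambda>u. pr u w" v] unfolding rk_def perpV_def by simp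
next
  assume G: "module.subspace scW G"
  have "snd (rk scV scW pr v w) = (\<lambda>y. scW (- pr v y) w)"
    unfolding rk_def using module.scale_minus_left[OF mW] by simp
  then show "snd (rk scV scW pr v w) ` G \<subseteq> G \<longleftrightarrow> w \<in> G \<or> v \<in> perpW pr G"
    using rank_one_stabilizes[OF mW G, of "\<lambda>y. - pr v y" w] unfolding perpW_def by simp
qed

lemma rk_in_St_V:
  assumes mV: "module scV" and mW: "module scW" and sub: "\<forall>F\<in>\<FF>. module.subspace scV F"
  shows "rk scV scW pr v w \<in> St_V scV scW pr \<FF> \<longleftrightarrow> (\<forall>F\<in>\<FF>. v \<in> F \<or> w \<in> perpV pr F)"
proof -
  have "\<forall>F\<in>\<FF>. fst (rk scV scW pr v w) ` F \<subseteq> F \<longleftrightarrow> v \<in> F \<or> w \<in> perpV pr F"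
    using sub rk_stabilizes(1)[OF mV mW] by blast
  then show ?thesis unfolding St_V_def by (simp add: rk_in_gl)
qed

lemma rk_in_St_W:
  assumes mV: "module scV" and mW: "module scW" and sub: "\<forall>G\<in>\<GG>. module.subspace scW G"
  shows "rk scV scW pr v w \<in> St_W scV scW pr \<GG> \<longleftrightarrow> (\<forall>G\<in>\<GG>. w \<in> G \<or> v \<in> perpW pr G)"
proof -
  have "\<forall>G\<in>\<GG>. snd (rk scV scW pr v w) ` G \<subseteq> G \<longleftrightarrow> w \<in> G \<or> v \<in> perpW pr G"
    using sub rk_stabilizes(2)[OF mV mW] by blast
  then show ?thesis unfolding St_W_def by (simp add: rk_in_gl)
qed

definition compatible :: "('a \<Rightarrow> 'b \<Rightarrow> complex) \<Rightarrow> 'a set set \<Rightarrow> 'b set set \<Rightarrow> 'a \<Rightarrow> 'b \<Rightarrow> bool" where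
  "compatible p \<FF> \<GG> v w \<longleftrightarrow>
     (\<forall>F\<in>\<FF>. v \<in> F \<or> w \<in> perpV p F) \<and> (\<forall>G\<in>\<GG>. w \<in> G \<or> v \<in> perpW p G)"

lemma compatible_swp: "compatible (swp p) \<GG> \<FF> w v = compatible p \<FF> \<GG> v w"
  unfolding compatible_def by auto

lemma flag_side_iff:
  assumes fl: "set_flag \<FF>" and v0: "v \<noteq> 0"
  shows "(\<forall>F\<in>\<FF>. v \<in> F \<or> w \<in> perpV p F) \<longleftrightarrow> w \<in> perpV p (low \<FF> v)"
proof
  assume "\<forall>F\<in>\<FF>. v \<in> F \<or> w \<in> perpV p F"
  moreover have "low \<FF> v \<in> \<FF>" using imm_pair_members[OF cut_pair(1)[OF fl v0]] by blast
  ultimately show "w \<in> perpV p (low \<FF> v)" using cut_pair(3)[OF fl v0] by blast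
next
  assume w: "w \<in> perpV p (low \<FF> v)"
  show "\<forall>F\<in>\<FF>. v \<in> F \<or> w \<in> perpV p F"
  proof
    fix F assume F: "F \<in> \<FF>"
    show "v \<in> F \<or> w \<in> perpV p F"
    proof (cases "v \<in> F")
      case False
      then have "perpV p (low \<FF> v) \<subseteq> perpV p F" by (rule perpV_antimono[OF below_low[OF fl F v0]])
      with w show ?thesis by blast
    qed simp
  qed
qed

lemma compatible_iff_low:
  assumes "set_flag \<FF>" "set_flag \<GG>" "v \<noteq> 0" "w \<noteq> 0"
  shows "compatible p \<FF> \<GG> v w \<longleftrightarrow> w \<in> perpV p (low \<FF> v) \<and> v \<in> perpW p (low \<GG> w)"
  using flag_side_iff[OF assms(1,3), of w p] flag_side_iff[OF assms(2,4), of v "swp p"]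
  unfolding compatible_def by simp

text \<open>The tautness condition in the form used below, read off from rank-one elements: if the
  vector w of V_* is not orthogonal to F, then (low w)^\<perp> lies in the closure of F.\<close>

definition transfers :: "('a \<Rightarrow> 'b::zero \<Rightarrow> complex) \<Rightarrow> 'a set set \<Rightarrow> 'b set set \<Rightarrow> bool" where
  "transfers p \<FF> \<GG> \<longleftrightarrow> (\<forall>F\<in>\<FF>. \<forall>w. w \<noteq> 0 \<longrightarrow> w \<notin> perpV p F \<longrightarrow>
      perpW p (low \<GG> w) \<subseteq> pclosure p F)"

lemma compatible_outside_cut:
  fixes p :: "'a::zero \<Rightarrow> 'b::zero \<Rightarrow> complex"
  assumes flF: "set_flag \<FF>" and flG: "set_flag \<GG>"
    and tF: "transfers p \<FF> \<GG>" and tG: "transfers (swp p) \<GG> \<FF>"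
    and v0: "v \<noteq> 0" and z0: "z \<noteq> 0"
    and outside: "\<not> perpV p (low \<FF> v) \<subseteq> perpV p (perpW p (low \<GG> z))"
  shows "compatible p \<FF> \<GG> v z"
proof -
  let ?Y = "perpV p (low \<FF> v)"
  have lowF: "low \<FF> v \<in> \<FF>" and lowG: "low \<GG> z \<in> \<GG>"
    using imm_pair_members cut_pair(1)[OF flF v0] cut_pair(1)[OF flG z0] by blast+
  have "z \<in> ?Y"
  proof (rule ccontr)
    assume "z \<notin> ?Y"
    then have "perpW p (low \<GG> z) \<subseteq> perpW p ?Y" using tF lowF z0 unfolding transfers_def by blast
    then have "perpV p (perpW p ?Y) \<subseteq> perpV p (perpW p (low \<GG> z))" by (rule perpV_antimono)
    moreover have "?Y \<subseteq> perpV p (perpW p ?Y)" using pclosure_increasing[of ?Y "swp p"] by simp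
    ultimately show False using outside by blast
  qed
  moreover have "v \<in> perpW p (low \<GG> z)"
  proof (rule ccontr)
    assume "v \<notin> perpW p (low \<GG> z)"
    then have "?Y \<subseteq> perpV p (perpW p (low \<GG> z))"
      using tG lowG v0 unfolding transfers_def perp_swp by blast
    with outside show False ..
  qed
  ultimately show ?thesis using compatible_iff_low[OF flF flG v0 z0] by blast
qed

text \<open>If x is orthogonal to all such w, and Y meets the complement of a member C of the
  semiclosed flag, then x \<perp> C: every nonzero z \<in> C has a strictly smaller lower set, whose
  closure stays inside C and hence does not absorb Y.\<close>

lemma orthogonal_to_cut:
  fixes p :: "'a \<Rightarrow> 'b::zero \<Rightarrow> complex"
  assumes flG: "set_flag \<GG>" and scG: "semiclosed (swp p) \<GG>" and p0: "p x 0 = 0"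
    and C: "C \<in> \<GG>" and y: "y \<in> Y" "y \<notin> C"
    and orth: "\<And>z. z \<noteq> 0 \<Longrightarrow> \<not> Y \<subseteq> perpV p (perpW p (low \<GG> z)) \<Longrightarrow> p x z = 0"
  shows "x \<in> perpW p C"
  unfolding perpW_def
proof (intro CollectI ballI)
  fix z assume z: "z \<in> C"
  show "p x z = 0"
  proof (cases "z = 0")
    case z0: False
    have "low \<GG> z \<in> \<GG>" using imm_pair_members cut_pair(1)[OF flG z0] by blast
    then have "perpV p (perpW p (low \<GG> z)) \<subseteq> C"
      using pclosure_below[OF flG scG _ C low_psubset[OF flG C z z0]] by simp
    then show ?thesis using orth[OF z0] y by blast
  qed (simp add: p0)
qed

lemma perp_compatible:
  fixes p :: "'a::zero \<Rightarrow> 'b::zero \<Rightarrow> complex"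
  assumes flF: "set_flag \<FF>" and flG: "set_flag \<GG>" and scG: "semiclosed (swp p) \<GG>"
    and p0: "\<And>x. p x 0 = 0"
    and tF: "transfers p \<FF> \<GG>" and tG: "transfers (swp p) \<GG> \<FF>" and v0: "v \<noteq> 0"
  shows "perpW p {w. compatible p \<FF> \<GG> v w} = pclosure p (low \<FF> v)"
proof -
  let ?Y = "perpV p (low \<FF> v)"
  have "{w. compatible p \<FF> \<GG> v w} \<subseteq> ?Y"
    using imm_pair_members cut_pair[OF flF v0] unfolding compatible_def by blast
  then have "perpW p ?Y \<subseteq> perpW p {w. compatible p \<FF> \<GG> v w}" by (rule perpW_antimono)
  moreover have "perpW p {w. compatible p \<FF> \<GG> v w} \<subseteq> perpW p ?Y"
  proof
    fix x assume x: "x \<in> perpW p {w. compatible p \<FF> \<GG> v w}"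
    have orth: "p x z = 0" if "z \<noteq> 0" "\<not> ?Y \<subseteq> perpV p (perpW p (low \<GG> z))" for z
      using x compatible_outside_cut[OF flF flG tF tG v0 that] unfolding perpW_def by blast
    have "p x y = 0" if y: "y \<in> ?Y" for y
    proof (cases "y = 0")
      case y0: False
      let ?C = "low \<GG> y"
      have C: "?C \<in> \<GG>" "y \<notin> ?C" using imm_pair_members cut_pair[OF flG y0] by blast+
      show ?thesis
      proof (cases "?Y \<subseteq> perpV p (perpW p ?C)")
        case True
        have "x \<in> perpW p ?C" using orthogonal_to_cut[OF flG scG p0 C(1) y C(2) orth] by blast
        then show ?thesis using True y unfolding perpW_def perpV_def by blast
      qed (use orth y0 in blast)
    qed (simp add: p0)
    then show "x \<in> perpW p ?Y" unfolding perpW_def[of p ?Y] by blast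
  qed
  ultimately show ?thesis by blast
qed

lemma gen_flag_set_flag:
  assumes m: "module sc" and gf: "gen_flag sc \<FF>"
  shows "set_flag \<FF>" "\<forall>F\<in>\<FF>. module.subspace sc F"
proof -
  show sub: "\<forall>F\<in>\<FF>. module.subspace sc F" using gf unfolding gen_flag_def by blast
  then have "\<forall>F\<in>\<FF>. 0 \<in> F" using module.subspace_0[OF m] by blast
  then show "set_flag \<FF>" using gf unfolding gen_flag_def set_flag_def by simp
qed

lemma taut_couple_flags:
  assumes mV: "module scV" and mW: "module scW" and t: "taut_couple scV scW pr \<FF> \<GG>"
  shows "set_flag \<FF>" "semiclosed pr \<FF>" "\<forall>F\<in>\<FF>. module.subspace scV F"
    and "set_flag \<GG>" "semiclosed (swp pr) \<GG>" "\<forall>G\<in>\<GG>. module.subspace scW G"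
proof -
  have "semiclosed_V scV pr \<FF>" using t unfolding taut_couple_def by (rule conjunct1)
  then have V: "gen_flag scV \<FF>" "semiclosed pr \<FF>"
    unfolding semiclosed_V_def semiclosed_def by (rule conjunct1, rule conjunct2)
  have "semiclosed_W scW pr \<GG>" using t unfolding taut_couple_def by (rule conjunct1[OF conjunct2])
  then have W: "gen_flag scW \<GG>" "semiclosed (swp pr) \<GG>"
    unfolding semiclosed_W_def semiclosed_def perp_swp by (rule conjunct1, rule conjunct2)
  show "set_flag \<FF>" "semiclosed pr \<FF>" "\<forall>F\<in>\<FF>. module.subspace scV F"
    using gen_flag_set_flag[OF mV V(1)] V(2) by blast+
  show "set_flag \<GG>" "semiclosed (swp pr) \<GG>" "\<forall>G\<in>\<GG>. module.subspace scW G"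
    using gen_flag_set_flag[OF mW W(1)] W(2) by blast+
qed

lemma compatible_iff_rk_in_St:
  assumes mV: "module scV" and mW: "module scW" and t: "taut_couple scV scW pr \<FF> \<GG>"
  shows "compatible pr \<FF> \<GG> v w \<longleftrightarrow>
      rk scV scW pr v w \<in> St_V scV scW pr \<FF> \<inter> St_W scV scW pr \<GG>"
  unfolding compatible_def Int_iff rk_in_St_V[OF mV mW taut_couple_flags(3)[OF mV mW t]]
    rk_in_St_W[OF mV mW taut_couple_flags(6)[OF mV mW t]] ..

text \<open>Tautness gives the transfer property in both directions, by testing it on the
  rank-one elements of the stabilizers.\<close>

lemma taut_transfers:
  assumes mV: "module scV" and mW: "module scW" and nd: "nondeg_pairing scV scW pr"
    and t: "taut_couple scV scW pr \<FF> \<GG>"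
  shows "transfers pr \<FF> \<GG>" "transfers (swp pr) \<GG> \<FF>"
proof -
  note flags = taut_couple_flags[OF mV mW t]
  have stabW: "\<forall>x\<in>St_W scV scW pr \<GG>. \<forall>F\<in>\<FF>. snd x ` perpV pr F \<subseteq> perpV pr F"
    and stabV: "\<forall>x\<in>St_V scV scW pr \<FF>. \<forall>G\<in>\<GG>. fst x ` perpW pr G \<subseteq> perpW pr G"
    using t unfolding taut_couple_def by (rule conjunct1[OF conjunct2[OF conjunct2]],
        rule conjunct2[OF conjunct2[OF conjunct2]])
  show "transfers pr \<FF> \<GG>"
    unfolding transfers_def
  proof (intro ballI allI impI subsetI)
    fix F w v' assume F: "F \<in> \<FF>" and w0: "w \<noteq> 0" and w: "w \<notin> perpV pr F"
      and v': "v' \<in> perpW pr (low \<GG> w)"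
    have "\<forall>G\<in>\<GG>. w \<in> G \<or> v' \<in> perpW pr G"
      using flag_side_iff[OF flags(4) w0, of v' "swp pr"] v' by simp
    then have "rk scV scW pr v' w \<in> St_W scV scW pr \<GG>"
      by (subst rk_in_St_W[OF mV mW flags(6)])
    then have "snd (rk scV scW pr v' w) ` perpV pr F \<subseteq> perpV pr F"
      using stabW F by blast
    then have "w \<in> perpV pr F \<or> v' \<in> perpW pr (perpV pr F)"
      by (subst (asm) rk_stabilizes(2)[OF mV mW perp_subspaces(1)[OF mV mW nd]])
    with w show "v' \<in> pclosure pr F" by blast
  qed
  show "transfers (swp pr) \<GG> \<FF>"
    unfolding transfers_def perp_swp
  proof (intro ballI allI impI subsetI)
    fix G v w' assume G: "G \<in> \<GG>" and v0: "v \<noteq> 0" and v: "v \<notin> perpW pr G"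
      and w': "w' \<in> perpV pr (low \<FF> v)"
    have "\<forall>F\<in>\<FF>. v \<in> F \<or> w' \<in> perpV pr F"
      using flag_side_iff[OF flags(1) v0, of w' pr] w' by simp
    then have "rk scV scW pr v w' \<in> St_V scV scW pr \<FF>"
      by (subst rk_in_St_V[OF mV mW flags(3)])
    then have "fst (rk scV scW pr v w') ` perpW pr G \<subseteq> perpW pr G"
      using stabV G by blast
    then have "v \<in> perpW pr G \<or> w' \<in> perpV pr (perpW pr G)"
      by (subst (asm) rk_stabilizes(1)[OF mV mW perp_subspaces(2)[OF mV mW nd]])
    with v show "w' \<in> perpV pr (perpW pr G)" by blast
  qed
qed

lemma pclosures_from_compatible:
  assumes mV: "module scV" and mW: "module scW" and nd: "nondeg_pairing scV scW pr"
    and t: "taut_couple scV scW pr \<FF> \<GG>"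
  shows "v \<noteq> 0 \<Longrightarrow> perpW pr {w. compatible pr \<FF> \<GG> v w} = pclosure pr (low \<FF> v)"
    and "w \<noteq> 0 \<Longrightarrow> perpV pr {v. compatible pr \<FF> \<GG> v w} = pclosure (swp pr) (low \<GG> w)"
proof -
  note flags = taut_couple_flags[OF mV mW t] and tr = taut_transfers[OF mV mW nd t]
  have pr0: "pr u 0 = 0" "swp pr y 0 = 0" for u y
    using module_hom.zero[OF nondeg_pairing_linear(2)[OF nd]]
      module_hom.zero[OF nondeg_pairing_linear(1)[OF nd]] by (simp_all add: swp_def)
  show "perpW pr {w. compatible pr \<FF> \<GG> v w} = pclosure pr (low \<FF> v)" if "v \<noteq> 0"
    using perp_compatible[OF flags(1,4,5) pr0(1) tr that] .
  have "semiclosed (swp (swp pr)) \<FF>" "transfers (swp (swp pr)) \<FF> \<GG>"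
    using flags(2) tr(1) by simp_all
  from perp_compatible[OF flags(4,1) this(1) pr0(2) tr(2) this(2)]
  show "perpV pr {v. compatible pr \<FF> \<GG> v w} = pclosure (swp pr) (low \<GG> w)" if "w \<noteq> 0"
    using that unfolding perp_swp compatible_swp .
qed

lemma compatible_determines_pclosures:
  assumes mV: "module scV" and mW: "module scW" and nd: "nondeg_pairing scV scW pr"
    and t1: "taut_couple scV scW pr \<FF>1 \<GG>1" and t2: "taut_couple scV scW pr \<FF>2 \<GG>2"
    and comp: "compatible pr \<FF>1 \<GG>1 = compatible pr \<FF>2 \<GG>2"
  shows "v \<noteq> 0 \<Longrightarrow> pclosure pr (low \<FF>1 v) = pclosure pr (low \<FF>2 v)"
    and "w \<noteq> 0 \<Longrightarrow> pclosure (swp pr) (low \<GG>1 w) = pclosure (swp pr) (low \<GG>2 w)"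
  using pclosures_from_compatible[OF mV mW nd t1] pclosures_from_compatible[OF mV mW nd t2]
  unfolding comp by metis+

theorem proposition3p8:
  fixes scV :: "complex \<Rightarrow> 'v::ab_group_add \<Rightarrow> 'v"
    and scW :: "complex \<Rightarrow> 'w::ab_group_add \<Rightarrow> 'w"
    and pr :: "'v \<Rightarrow> 'w \<Rightarrow> complex"
  assumes "vector_space scV" and "vector_space scW"
    and "countable_dim scV" and "countable_dim scW"
    and "nondeg_pairing scV scW pr"
  shows "inj_on (\<lambda>(\<FF>, \<GG>). St_V scV scW pr \<FF> \<inter> St_W scV scW pr \<GG>)
           {(\<FF>, \<GG>). taut_couple scV scW pr \<FF> \<GG>}"
proof (rule inj_onI, clarify)
  have mV: "module scV" and mW: "module scW"
    using assms(1,2) by (simp_all add: module_iff_vector_space)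
  fix \<FF>1 \<GG>1 \<FF>2 \<GG>2
  assume t1: "taut_couple scV scW pr \<FF>1 \<GG>1" and t2: "taut_couple scV scW pr \<FF>2 \<GG>2"
    and St: "St_V scV scW pr \<FF>1 \<inter> St_W scV scW pr \<GG>1 = St_V scV scW pr \<FF>2 \<inter> St_W scV scW pr \<GG>2"
  have "compatible pr \<FF>1 \<GG>1 = compatible pr \<FF>2 \<GG>2"
    unfolding fun_eq_iff compatible_iff_rk_in_St[OF mV mW t1] compatible_iff_rk_in_St[OF mV mW t2] St
    by blast
  note cl = compatible_determines_pclosures[OF mV mW assms(5) t1 t2 this]
  note f1 = taut_couple_flags[OF mV mW t1] and f2 = taut_couple_flags[OF mV mW t2]
  show "\<FF>1 = \<FF>2 \<and> \<GG>1 = \<GG>2"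
    using flag_eq_by_pclosures[OF f1(1,2) f2(1,2) cl(1)] flag_eq_by_pclosures[OF f1(4,5) f2(4,5) cl(2)]
    by blast
qed

end
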